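(* For every $y>0$, the function $H_a(y)=\Gamma(a,y)/\Gamma(a-1,y)$ is increasing as a function of $a\in\mathbb{R}$.
   Context: $\Gamma(a,y)=\int_y^{\infty} t^{a-1}e^{-t}\,dt$ is the upper incomplete gamma function, defined for all real $a$ when $y>0$. *)

theory Defs
  imports "HOL-Analysis.Analysis"
begin

definition upper_inc_Gamma :: "real \<Rightarrow> real \<Rightarrow> real" where
  "upper_inc_Gamma a y = integral {y..} (\<lambda>t. t powr (a - 1) * exp (- t))"

definition H_ratio :: "real \<Rightarrow> real \<Rightarrow> real" where
  "H_ratio a y = upper_inc_Gamma a y / upper_inc_Gamma (a - 1) y"

end

theory Submission
  imports Defs
begin

text \<open>Let \<open>w(t) = t^(a-2) e^(-t)\<close> on \<open>[y,\<infinity>)\<close>, so that \<open>m = \<Gamma>(a,y) / \<Gamma>(a-1,y)\<close> is the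
  mean of \<open>t\<close> under the weight \<open>w\<close>. For \<open>d > 0\<close> the integrand \<open>(t - m)(t^d - m^d) w(t)\<close> is
  nonnegative and positive for \<open>t > m\<close>; expanding it, its integral is
  \<open>\<Gamma>(a+d,y) - m \<Gamma>(a+d-1,y) - m^d (\<Gamma>(a,y) - m \<Gamma>(a-1,y))\<close>, where the last bracket vanishes
  by the choice of \<open>m\<close>. Hence \<open>\<Gamma>(a+d,y) / \<Gamma>(a+d-1,y) > m\<close>.\<close>

definition gamma_density :: "real \<Rightarrow> real \<Rightarrow> real" where
  "gamma_density a t = t powr (a - 1) * exp (- t)"

lemma upper_inc_Gamma_eq_integral: "upper_inc_Gamma a y = integral {y..} (gamma_density a)"
  unfolding upper_inc_Gamma_def gamma_density_def ..

lemma gamma_density_pos: "t > 0 \<Longrightarrow> gamma_density a t > 0"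
  by (simp add: gamma_density_def)

lemma gamma_density_add_one: "t \<ge> 0 \<Longrightarrow> gamma_density (a + 1) t = t * gamma_density a t"
  using powr_mult_base[of t "a - 1"] by (simp add: gamma_density_def mult.assoc[symmetric])

lemma continuous_on_gamma_density: "S \<subseteq> {0<..} \<Longrightarrow> continuous_on S (gamma_density a)"
  unfolding gamma_density_def by (intro continuous_intros) auto

lemma gamma_density_integrable:
  assumes y: "y > 0"
  shows "gamma_density a integrable_on {y..}"
proof -
  define n :: nat where "n = nat \<lceil>\<bar>a - 1\<bar>\<rceil> + 1"
  have n0: "n > 0" by (simp add: n_def)
  have an: "a - 1 \<le> real n" unfolding n_def by linarith
  define K where "K = y powr (a - 1 - real n) * (2 * real n) ^ n"
  have bound: "norm (gamma_density a t) \<le> K * exp (- (1/2) * t)" if t: "t \<ge> y" for t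
  proof -
    have t0: "t > 0" using t y by auto
    have "t powr (a - 1) = t powr (a - 1 - real n) * t ^ n"
      using t0 by (simp add: powr_diff powr_realpow)
    also have "\<dots> \<le> y powr (a - 1 - real n) * t ^ n"
      by (intro mult_right_mono powr_mono2') (use t y an in auto)
    finally have A: "t powr (a - 1) \<le> y powr (a - 1 - real n) * t ^ n" .
    have "(t / (2 * real n)) ^ n \<le> (1 + (t/2) / real n) ^ n"
      using t0 n0 by (intro power_mono) auto
    also have "\<dots> \<le> exp (t/2)"
      by (rule exp_ge_one_plus_x_over_n_power_n) (use t0 n0 in auto)
    finally have B: "t ^ n \<le> (2 * real n) ^ n * exp (t/2)"
      using n0 by (simp add: power_divide field_simps)
    have "norm (gamma_density a t) = t powr (a - 1) * exp (- t)"
      unfolding gamma_density_def by simp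
    also have "\<dots> \<le> y powr (a - 1 - real n) * ((2 * real n) ^ n * exp (t/2)) * exp (-t)"
      using A B by (intro mult_right_mono order.trans[OF A] mult_left_mono) auto
    also have "\<dots> = K * exp (- (1/2) * t)"
      unfolding K_def by (simp add: mult.assoc flip: exp_add)
    finally show ?thesis .
  qed
  show ?thesis
  proof (rule measurable_bounded_by_integrable_imp_integrable)
    have "{y..} \<subseteq> {0<..}" using y by auto
    then show "gamma_density a \<in> borel_measurable (lebesgue_on {y..})"
      by (intro continuous_imp_measurable_on_sets_lebesgue continuous_on_gamma_density) auto
    show "(\<lambda>t. K * exp (- (1/2) * t)) integrable_on {y..}"
      using integrable_on_cmult_left[OF integrable_on_exp_minus_to_infinity[of "1/2" y], of K]
      by simp
  qed (use bound in auto)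
qed

lemma upper_inc_Gamma_has_integral:
  "y > 0 \<Longrightarrow> (gamma_density a has_integral upper_inc_Gamma a y) {y..}"
  unfolding upper_inc_Gamma_eq_integral by (rule integrable_integral[OF gamma_density_integrable])

lemma integral_pos_if_pos_on_interval:
  fixes h :: "real \<Rightarrow> real"
  assumes "h integrable_on {y..}" "\<And>t. t \<ge> y \<Longrightarrow> h t \<ge> 0"
    and "z \<ge> y" "continuous_on {z..z+1} h" "\<And>t. t \<in> {z<..<z+1} \<Longrightarrow> h t > 0"
  shows "integral {y..} h > 0"
proof -
  have "integral {z..z+1} (\<lambda>_. 0::real) < integral {z..z+1} h"
    by (rule integral_less_real) (use assms in auto)
  hence "0 < integral {z..z+1} h" by simp
  also have "\<dots> \<le> integral {y..} h"
    by (rule integral_subset_le)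
       (use assms in \<open>auto intro: integrable_continuous_interval\<close>)
  finally show ?thesis .
qed

lemma upper_inc_Gamma_pos:
  assumes "y > 0"
  shows "upper_inc_Gamma a y > 0"
  unfolding upper_inc_Gamma_eq_integral
proof (rule integral_pos_if_pos_on_interval[where z = y])
  show "continuous_on {y..y+1} (gamma_density a)"
    by (rule continuous_on_gamma_density) (use assms in auto)
qed (use assms gamma_density_integrable gamma_density_pos in \<open>auto intro: less_imp_le\<close>)

lemma mult_diff_powr_diff_nonneg:
  fixes t m d :: real
  assumes "t > 0" "m > 0" "d > 0"
  shows "(t - m) * (t powr d - m powr d) \<ge> 0"
proof (cases "t \<ge> m")
  case True
  hence "t powr d \<ge> m powr d" using assms by (intro powr_mono2) auto
  thus ?thesis using True by simp
next
  case False
  hence "t powr d \<le> m powr d" using assms by (intro powr_mono2) auto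
  thus ?thesis using False by (simp add: mult_nonpos_nonpos)
qed

lemma gamma_density_moment_expansion:
  assumes "t \<ge> 0"
  shows "(t - m) * (t powr d - m powr d) * gamma_density (a - 1) t
    = (gamma_density (a + d) t - m * gamma_density (a + d - 1) t)
      - m powr d * (gamma_density a t - m * gamma_density (a - 1) t)"
proof -
  have "gamma_density (a + d - 1) t = t powr d * gamma_density (a - 1) t"
    by (simp add: gamma_density_def powr_add[symmetric] algebra_simps)
  moreover have "gamma_density (a + d) t = t * gamma_density (a + d - 1) t"
    "gamma_density a t = t * gamma_density (a - 1) t"
    using gamma_density_add_one[OF assms, of "a + d - 1"] gamma_density_add_one[OF assms, of "a - 1"]
    by simp_all
  ultimately show ?thesis by (simp add: algebra_simps)
qed

lemma H_ratio_less_shift: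
  assumes y: "y > 0" and d: "d > 0"
  shows "H_ratio a y < H_ratio (a + d) y"
proof -
  let ?\<Gamma> = "\<lambda>c. upper_inc_Gamma c y"
  define m where "m = H_ratio a y"
  have \<Gamma>_pos: "?\<Gamma> c > 0" for c using upper_inc_Gamma_pos y by blast
  hence m: "m > 0" unfolding m_def H_ratio_def by simp
  define h where "h t = (t - m) * (t powr d - m powr d) * gamma_density (a - 1) t" for t
  define g where "g t = (gamma_density (a + d) t - m * gamma_density (a + d - 1) t)
    - m powr d * (gamma_density a t - m * gamma_density (a - 1) t)" for t
  have h_eq_g: "h t = g t" if "t \<ge> y" for t
    unfolding h_def g_def using that y by (intro gamma_density_moment_expansion) auto
  have "(g has_integral (?\<Gamma> (a + d) - m * ?\<Gamma> (a + d - 1)) - m powr d * (?\<Gamma> a - m * ?\<Gamma> (a - 1))) {y..}"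
    unfolding g_def
    by (intro has_integral_diff has_integral_mult_right upper_inc_Gamma_has_integral y)
  moreover have "?\<Gamma> a - m * ?\<Gamma> (a - 1) = 0"
    using \<Gamma>_pos[of "a - 1"] unfolding m_def H_ratio_def by simp
  ultimately have h_integral: "(h has_integral ?\<Gamma> (a + d) - m * ?\<Gamma> (a + d - 1)) {y..}"
    using has_integral_cong[of "{y..}" h g] h_eq_g by simp
  have "integral {y..} h > 0"
  proof (rule integral_pos_if_pos_on_interval[where z = "max y m + 1"])
    show "h integrable_on {y..}" using h_integral by blast
    show "h t \<ge> 0" if "t \<ge> y" for t
      unfolding h_def using that y m d
      by (intro mult_nonneg_nonneg mult_diff_powr_diff_nonneg less_imp_le[OF gamma_density_pos]) auto
    show "continuous_on {max y m + 1..max y m + 1 + 1} h"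
      unfolding h_def using m y
      by (intro continuous_intros continuous_on_gamma_density) auto
    show "h t > 0" if "t \<in> {max y m + 1<..<max y m + 1 + 1}" for t
    proof -
      have t: "t > m" "t > 0" using that m by auto
      have "t powr d > m powr d" using d m t by (intro powr_less_mono2) auto
      thus ?thesis unfolding h_def using t gamma_density_pos by simp
    qed
  qed simp
  then have "?\<Gamma> (a + d) > m * ?\<Gamma> (a + d - 1)"
    unfolding integral_unique[OF h_integral] by simp
  then show ?thesis
    using \<Gamma>_pos[of "a + d - 1"] unfolding m_def H_ratio_def[of "a + d"]
    by (simp add: field_simps)
qed

theorem theorem9:
  fixes y :: real
  assumes "y > 0"
  shows "strict_mono (\<lambda>a. H_ratio a y)"
proof (rule strict_monoI)
  fix a b :: real
  assume "a < b"
  then show "H_ratio a y < H_ratio b y"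
    using H_ratio_less_shift[OF assms, of "b - a" a] by simp
qed

end
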